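(* Every 2-local 1-automorphism of a finite dimensional formally real Jordan algebra $\mathcal{A}$ is an automorphism.
   Context: A real Jordan algebra is formally real if $\sum_i a_i^2=0$ (finite sum) implies each $a_i=0$; $\mathcal{A}$ is unital with identity $1$. A symmetry is $s\in\mathcal{A}$ with $s^2=1$, and $U_s(x)=2s(sx)-x$. A 2-local 1-automorphism is a map $\Delta:\mathcal{A}\to\mathcal{A}$ (not assumed linear) such that for every $x,y\in\mathcal{A}$ there is a symmetry $s$ with $\Delta(x)=U_s(x)$ and $\Delta(y)=U_s(y)$. *)

theory Defs
  imports "HOL-Analysis.Analysis"
begin

definition jordan_algebra :: "('a::real_vector \<Rightarrow> 'a \<Rightarrow> 'a) \<Rightarrow> bool" where
  "jordan_algebra m \<longleftrightarrow>
     (\<forall>x y z. m (x + y) z = m x z + m y z) \<and>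
     (\<forall>c x y. m (c *\<^sub>R x) y = c *\<^sub>R m x y) \<and>
     (\<forall>x y. m x y = m y x) \<and>
     (\<forall>x y. m (m x y) (m x x) = m x (m y (m x x)))"

definition jordan_unit :: "('a \<Rightarrow> 'a \<Rightarrow> 'a) \<Rightarrow> 'a \<Rightarrow> bool" where
  "jordan_unit m e \<longleftrightarrow> (\<forall>x. m e x = x \<and> m x e = x)"

definition formally_real :: "('a::real_vector \<Rightarrow> 'a \<Rightarrow> 'a) \<Rightarrow> bool" where
  "formally_real m \<longleftrightarrow>
     (\<forall>(n::nat) (a::nat \<Rightarrow> 'a). (\<Sum>i<n. m (a i) (a i)) = 0 \<longrightarrow> (\<forall>i<n. a i = 0))"

definition finite_dim_space :: "'a::real_vector itself \<Rightarrow> bool" where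
  "finite_dim_space _ \<longleftrightarrow> (\<exists>B::'a set. finite B \<and> span B = UNIV)"

definition symmetry :: "('a \<Rightarrow> 'a \<Rightarrow> 'a) \<Rightarrow> 'a \<Rightarrow> 'a \<Rightarrow> bool" where
  "symmetry m e s \<longleftrightarrow> m s s = e"

definition U_op :: "('a::real_vector \<Rightarrow> 'a \<Rightarrow> 'a) \<Rightarrow> 'a \<Rightarrow> 'a \<Rightarrow> 'a" where
  "U_op m s x = 2 *\<^sub>R m s (m s x) - x"

definition two_local_1_automorphism ::
    "('a::real_vector \<Rightarrow> 'a \<Rightarrow> 'a) \<Rightarrow> 'a \<Rightarrow> ('a \<Rightarrow> 'a) \<Rightarrow> bool" where
  "two_local_1_automorphism m e \<Delta> \<longleftrightarrow>
     (\<forall>x y. \<exists>s. symmetry m e s \<and> \<Delta> x = U_op m s x \<and> \<Delta> y = U_op m s y)"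

definition jordan_automorphism :: "('a::real_vector \<Rightarrow> 'a \<Rightarrow> 'a) \<Rightarrow> ('a \<Rightarrow> 'a) \<Rightarrow> bool" where
  "jordan_automorphism m T \<longleftrightarrow> linear T \<and> bij T \<and> (\<forall>x y. T (m x y) = m (T x) (T y))"

end

theory Submission
  imports Defs "HOL-Computational_Algebra.Fundamental_Theorem_Algebra"
begin

text \<open>For a symmetry \<open>s\<close> the operator \<open>U\<^sub>s\<close> is an automorphism, because
  \<open>L\<^bsub>U\<^sub>s a\<^esub> = U\<^sub>s L\<^sub>a U\<^sub>s\<close>. Hence a 2-local 1-automorphism \<open>\<Delta>\<close> agrees on any two
  elements with an automorphism, so it preserves squares, scalar multiples and the trace form
  \<open>\<tau>(a, b) = Tr L\<^bsub>a b\<^esub>\<close>, which is \<open>U\<^sub>s\<close>-invariant by cyclicity of the trace.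
  In a finite dimensional formally real Jordan algebra \<open>\<tau>\<close> is positive definite: a minimal
  annihilating polynomial of \<open>x\<close> has only simple real roots, so \<open>x\<^sup>2 = \<Sum> r\<^sup>2 f\<^sub>r\<close>
  with idempotents \<open>f\<^sub>r\<close>, and \<open>Tr L\<^sub>f > 0\<close> for every idempotent \<open>f \<noteq> 0\<close> by the Peirce
  decomposition. The defect \<open>\<Delta>(x + y) - \<Delta> x - \<Delta> y\<close> is \<open>\<tau>\<close>-orthogonal to itself, so \<open>\<Delta>\<close>
  is additive; polarization makes it multiplicative, and an injective linear map of a finite
  dimensional space is bijective.\<close>

section \<open>Real polynomials\<close>

lemma map_poly_of_real_add:
  "map_poly of_real (p + q) = (map_poly of_real p + map_poly of_real q :: 'a::real_algebra_1 poly)"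
  by (rule poly_eqI) (simp add: coeff_map_poly)

lemma map_poly_of_real_mult:
  "map_poly of_real (p * q)
    = (map_poly of_real p * map_poly of_real q :: 'a::{comm_ring_1,real_algebra_1} poly)"
  by (rule poly_eqI) (simp add: coeff_map_poly coeff_mult)

lemma poly_map_poly_of_real:
  "poly (map_poly of_real p) (of_real r :: 'a::{comm_ring_1,real_algebra_1}) = of_real (poly p r)"
  by (induction p rule: pCons_induct) (simp_all add: map_poly_pCons)

lemma real_poly_has_complex_root:
  fixes h :: "real poly"
  assumes "degree h > 0"
  obtains z where "poly (map_poly complex_of_real h) z = 0"
proof -
  have "degree (map_poly complex_of_real h) = degree h" by (rule degree_map_poly) simp
  with assms have "\<not> constant (poly (map_poly complex_of_real h))" by (simp add: constant_degree)
  then show ?thesis using fundamental_theorem_of_algebra that by blast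
qed

text \<open>The remainder of \<open>h\<close> modulo \<open>(t - a)\<^sup>2 + b\<^sup>2\<close> has degree at most one and vanishes at
  the non-real point \<open>z = a + bi\<close>.\<close>
lemma real_poly_square_sum_dvd_of_complex_root:
  fixes h :: "real poly"
  assumes root: "poly (map_poly complex_of_real h) z = 0" and nonreal: "Im z \<noteq> 0"
  shows "[:- Re z, 1:]^2 + [:Im z:]^2 dvd h"
proof -
  define q where "q = [:- Re z, 1:]^2 + [:Im z:]^2"
  have q_coeffs: "q = [:Re z ^ 2 + Im z ^ 2, - 2 * Re z, 1:]"
    by (simp add: q_def power2_eq_square algebra_simps)
  have "q \<noteq> 0" "degree q = 2" by (simp_all add: q_coeffs)
  define r where "r = h mod q"
  have "poly (map_poly complex_of_real q) z = 0"
    by (cases z) (simp add: q_coeffs map_poly_pCons complex_eq_iff power2_eq_square algebra_simps)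
  moreover have "h = h div q * q + r" by (simp add: r_def)
  then have "poly (map_poly complex_of_real h) z
      = poly (map_poly complex_of_real (h div q)) z * poly (map_poly complex_of_real q) z
        + poly (map_poly complex_of_real r) z"
    by (metis map_poly_of_real_add map_poly_of_real_mult poly_add poly_mult)
  ultimately have r_root: "poly (map_poly complex_of_real r) z = 0" using root by simp
  have "degree r \<le> 1"
    using degree_mod_less[OF \<open>q \<noteq> 0\<close>, of h] \<open>degree q = 2\<close> by (cases "r = 0") (auto simp: r_def)
  then have r_linear: "r = [:coeff r 0, coeff r 1:]"
    by (intro poly_eqI) (auto simp: coeff_pCons coeff_eq_0 split: nat.splits)
  have "of_real (coeff r 0) + of_real (coeff r 1) * z = 0"
    using r_root by (subst (asm) r_linear) (simp add: map_poly_pCons mult.commute)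
  with nonreal have "coeff r 1 = 0" "coeff r 0 = 0" by (auto simp: complex_eq_iff)
  then have "r = 0" by (subst r_linear) simp
  then show ?thesis by (simp add: q_def r_def mod_eq_0_iff_dvd)
qed

lemma prod_linear_factors_dvd:
  fixes q :: "'a::idom poly"
  assumes "finite S" "\<And>r. r \<in> S \<Longrightarrow> poly q r = 0"
  shows "(\<Prod>r\<in>S. [:- r, 1:]) dvd q"
  using assms
proof (induction S arbitrary: q rule: finite_induct)
  case empty
  then show ?case by simp
next
  case (insert r S)
  then obtain q' where q': "q = [:- r, 1:] * q'"
    by (metis dvd_def insertI1 poly_eq_0_iff_dvd)
  have "poly q' s = 0" if "s \<in> S" for s
    using insert.prems[of s] insert.hyps(2) that q' by auto
  then have "(\<Prod>r\<in>S. [:- r, 1:]) dvd q'" by (rule insert.IH)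
  moreover have "(\<Prod>r\<in>insert r S. [:- r, 1:]) = [:- r, 1:] * (\<Prod>r\<in>S. [:- r, 1:])"
    using insert.hyps by simp
  ultimately show ?case unfolding q' by (metis dvd_refl mult_dvd_mono)
qed

lemma real_poly_simple_roots_or_square_sum_factor:
  fixes p :: "real poly"
  assumes "p \<noteq> 0"
  obtains c where "p = smult c (\<Prod>r | poly p r = 0. [:- r, 1:])"
    | a b k where "p = ([:- a, 1:]^2 + [:b:]^2) * k"
proof -
  define S where "S = {r. poly p r = 0}"
  have "finite S" unfolding S_def using assms by (rule poly_roots_finite)
  moreover have "poly p r = 0" if "r \<in> S" for r
    using that by (simp add: S_def)
  ultimately obtain h where ph: "p = (\<Prod>r\<in>S. [:- r, 1:]) * h"
    by (metis dvd_def prod_linear_factors_dvd)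
  show ?thesis
  proof (cases "degree h = 0")
    case True
    then obtain c where "h = [:c:]" by (metis degree_eq_zeroE)
    then have "p = smult c (\<Prod>r\<in>S. [:- r, 1:])" using ph by simp
    then show ?thesis unfolding S_def by (rule that(1))
  next
    case False
    then obtain z where root: "poly (map_poly complex_of_real h) z = 0"
      using real_poly_has_complex_root by blast
    show ?thesis
    proof (cases "Im z = 0")
      case True
      define a where "a = Re z"
      have "z = of_real a" using True by (simp add: a_def complex_eq_iff)
      with root have "poly h a = 0"
        using poly_map_poly_of_real[of h a, where 'a=complex] by simp
      then obtain k where hk: "h = [:- a, 1:] * k" by (metis dvd_def poly_eq_0_iff_dvd)
      have "a \<in> S" unfolding S_def using \<open>poly h a = 0\<close> by (subst ph) simp
      then have "(\<Prod>r\<in>S. [:- r, 1:]) = [:- a, 1:] * (\<Prod>r\<in>S - {a}. [:- r, 1:])"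
        using \<open>finite S\<close> by (simp add: prod.remove)
      then have "p = ([:- a, 1:]^2 + [:0:]^2) * ((\<Prod>r\<in>S - {a}. [:- r, 1:]) * k)"
        unfolding ph hk
        by (simp only: power2_eq_square pCons_0_0 mult_zero_left add_0_right add_0_left ac_simps)
      then show ?thesis by (rule that(2))
    next
      case False
      then obtain k where "h = ([:- Re z, 1:]^2 + [:Im z:]^2) * k"
        using real_poly_square_sum_dvd_of_complex_root[OF root] by (auto simp: dvd_def)
      then have "p = ([:- Re z, 1:]^2 + [:Im z:]^2) * ((\<Prod>r\<in>S. [:- r, 1:]) * k)"
        unfolding ph by (simp only: ac_simps)
      then show ?thesis by (rule that(2))
    qed
  qed
qed

lemma lagrange_basis_polys:
  fixes S :: "'a::field set"
  assumes "finite S"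
  obtains l where "\<And>r v. v \<in> S \<Longrightarrow> poly (l r) v = (if v = r then 1 else 0)"
proof
  fix r v assume "v \<in> S"
  show "poly (\<Prod>u\<in>S - {r}. smult (1 / (r - u)) [:- u, 1:]) v = (if v = r then 1 else 0)"
  proof (cases "v = r")
    case True
    have "poly (smult (1 / (r - u)) [:- u, 1:]) v = 1" if "u \<in> S - {r}" for u
      using that True by (auto simp: diff_divide_distrib[symmetric])
    then show ?thesis using True by (simp add: poly_prod)
  next
    case False
    then show ?thesis
      using \<open>v \<in> S\<close> \<open>finite S\<close> by (auto simp: poly_prod intro!: prod_zero bexI[of _ v])
  qed
qed

section \<open>Traces of linear maps\<close>

lemma finite_dimensional_vector_space_scaleR_iff:
  "finite_dimensional_vector_space (scaleR :: real \<Rightarrow> 'a \<Rightarrow> 'a::real_vector) B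
    \<longleftrightarrow> finite B \<and> independent B \<and> span B = UNIV"
  unfolding finite_dimensional_vector_space_def finite_dimensional_vector_space_axioms_def
  by (auto simp: vector_space_def dependent_raw_def span_raw_def scaleR_add_right scaleR_add_left)

definition trace_wrt :: "'a::real_vector set \<Rightarrow> ('a \<Rightarrow> 'a) \<Rightarrow> real" where
  "trace_wrt B T = (\<Sum>b\<in>B. representation B (T b) b)"

context
  fixes B :: "'a::real_vector set"
  assumes basis: "finite_dimensional_vector_space (*\<^sub>R) B"
begin

private lemma basis_finite: "finite B" and basis_independent: "independent B"
  and basis_span: "span B = UNIV"
  using basis by (simp_all add: finite_dimensional_vector_space_scaleR_iff)

lemma sum_representation_basis: "(\<Sum>b\<in>B. representation B v b *\<^sub>R b) = v"
  by (rule sum_representation_eq) (simp_all add: basis_finite basis_independent basis_span)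

lemma representation_basis_sum: "representation B (sum f I) b = (\<Sum>i\<in>I. representation B (f i) b)"
  using representation_sum[OF basis_independent, of I f] by (simp add: basis_span)

lemma representation_basis_scaleR: "representation B (c *\<^sub>R v) b = c * representation B v b"
  using representation_scale[OF basis_independent, of v c] by (simp add: basis_span)

lemma representation_basis_add:
  "representation B (u + v) b = representation B u b + representation B v b"
  using representation_add[OF basis_independent, of v u] by (simp add: basis_span)

lemma trace_wrt_add: "trace_wrt B (\<lambda>v. S v + T v) = trace_wrt B S + trace_wrt B T"
  by (simp add: trace_wrt_def representation_basis_add sum.distrib)

lemma trace_wrt_scaleR: "trace_wrt B (\<lambda>v. c *\<^sub>R T v) = c * trace_wrt B T"
  by (simp add: trace_wrt_def representation_basis_scaleR sum_distrib_left)

lemma trace_wrt_comp: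
  assumes "linear S"
  shows "trace_wrt B (\<lambda>v. S (T v))
    = (\<Sum>b\<in>B. \<Sum>c\<in>B. representation B (T b) c * representation B (S c) b)"
proof -
  have "S (T b) = (\<Sum>c\<in>B. representation B (T b) c *\<^sub>R S c)" for b
    using linear_sum[OF assms] linear_scale[OF assms] sum_representation_basis[of "T b"]
    by (metis (no_types, lifting) sum.cong)
  then show ?thesis
    by (simp add: trace_wrt_def representation_basis_sum representation_basis_scaleR)
qed

lemma trace_wrt_comp_commute:
  assumes "linear S" "linear T"
  shows "trace_wrt B (\<lambda>v. S (T v)) = trace_wrt B (\<lambda>v. T (S v))"
  unfolding trace_wrt_comp[OF assms(1)] trace_wrt_comp[OF assms(2)]
  by (subst sum.swap) (simp add: mult.commute)

end

lemma trace_wrt_basis_independent: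
  fixes B C :: "'a::real_vector set"
  assumes B: "finite_dimensional_vector_space (*\<^sub>R) B"
    and C: "finite_dimensional_vector_space (*\<^sub>R) C"
    and "linear T"
  shows "trace_wrt B T = trace_wrt C T"
proof -
  have "trace_wrt B T = (\<Sum>b\<in>B. representation B (T (\<Sum>c\<in>C. representation C b c *\<^sub>R c)) b)"
    by (simp add: trace_wrt_def sum_representation_basis[OF C])
  also have "\<dots> = (\<Sum>b\<in>B. \<Sum>c\<in>C. representation C b c * representation B (T c) b)"
    by (simp add: linear_sum[OF \<open>linear T\<close>] linear_scale[OF \<open>linear T\<close>]
        representation_basis_sum[OF B] representation_basis_scaleR[OF B])
  also have "\<dots> = (\<Sum>c\<in>C. \<Sum>b\<in>B. representation B (T c) b * representation C b c)"
    by (subst sum.swap) (simp add: mult.commute)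
  also have "\<dots> = (\<Sum>c\<in>C. representation C (\<Sum>b\<in>B. representation B (T c) b *\<^sub>R b) c)"
    by (simp add: representation_basis_sum[OF C] representation_basis_scaleR[OF C])
  also have "\<dots> = trace_wrt C T"
    by (simp add: sum_representation_basis[OF B] trace_wrt_def)
  finally show ?thesis .
qed

lemma independent_Un_if_projection:
  fixes P :: "'a::real_vector \<Rightarrow> 'a"
  assumes P: "linear P" and fin: "finite A" "finite C" and disj: "A \<inter> C = {}"
    and indep: "independent A" "independent C"
    and P_A: "\<And>u. u \<in> A \<Longrightarrow> P u = u" and P_C: "\<And>u. u \<in> C \<Longrightarrow> P u = 0"
  shows "independent (A \<union> C)"
proof (rule independent_if_scalars_zero)
  show "finite (A \<union> C)" using fin by simp
  fix c v assume comb: "(\<Sum>v\<in>A \<union> C. c v *\<^sub>R v) = 0" and v: "v \<in> A \<union> C"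
  have split: "(\<Sum>v\<in>A \<union> C. c v *\<^sub>R v) = (\<Sum>v\<in>A. c v *\<^sub>R v) + (\<Sum>v\<in>C. c v *\<^sub>R v)"
    using fin disj by (simp add: sum.union_disjoint)
  have "P (\<Sum>v\<in>A \<union> C. c v *\<^sub>R v) = (\<Sum>v\<in>A. c v *\<^sub>R v)"
    unfolding split by (simp add: linear_add[OF P] linear_sum[OF P] linear_scale[OF P] P_A P_C)
  then have "(\<Sum>v\<in>A. c v *\<^sub>R v) = 0" "(\<Sum>v\<in>C. c v *\<^sub>R v) = 0"
    using comb split linear_0[OF P] by simp_all
  then show "c v = 0" using v indep fin dependent_finite by blast
qed

text \<open>The trace is computed in a basis of \<open>range P\<close> extended by a basis of \<open>range (id - P)\<close>.\<close>
lemma trace_wrt_idempotent_eq_card: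
  fixes B :: "'a::real_vector set" and P :: "'a \<Rightarrow> 'a"
  assumes B: "finite_dimensional_vector_space (*\<^sub>R) B"
    and P: "linear P" and idem: "\<And>v. P (P v) = P v"
  obtains B1 where "finite B1" "range P \<subseteq> span B1" "trace_wrt B P = card B1"
proof -
  have finB: "finite B" and spanB: "span B = UNIV"
    using B by (simp_all add: finite_dimensional_vector_space_scaleR_iff)
  obtain B1 where B1: "B1 \<subseteq> range P" "independent B1" "range P \<subseteq> span B1"
    by (rule basis_exists)
  obtain B2 where B2: "B2 \<subseteq> range (\<lambda>v. v - P v)" "independent B2"
    "range (\<lambda>v. v - P v) \<subseteq> span B2"
    by (rule basis_exists)
  have fin: "finite B1" "finite B2"
    using independent_span_bound[OF finB B1(2)] independent_span_bound[OF finB B2(2)] spanB by auto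
  have P_B1: "P u = u" if "u \<in> B1" for u using that B1(1) idem by auto
  have P_B2: "P u = 0" if "u \<in> B2" for u using that B2(1) idem linear_diff[OF P] by auto
  have disj: "B1 \<inter> B2 = {}"
    using P_B1 P_B2 B1(2) dependent_zero by fastforce
  have "P v + (v - P v) \<in> span (B1 \<union> B2)" for v
    using B1(3) B2(3) span_mono[of B1 "B1 \<union> B2"] span_mono[of B2 "B1 \<union> B2"]
    by (blast intro: span_add)
  then have "span (B1 \<union> B2) = UNIV" by auto
  moreover have indep: "independent (B1 \<union> B2)"
    using independent_Un_if_projection[OF P fin disj B1(2) B2(2) P_B1 P_B2] .
  ultimately have C: "finite_dimensional_vector_space (*\<^sub>R) (B1 \<union> B2)"
    using fin by (simp add: finite_dimensional_vector_space_scaleR_iff)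
  have "trace_wrt (B1 \<union> B2) P
      = (\<Sum>u\<in>B1. representation (B1 \<union> B2) (P u) u) + (\<Sum>u\<in>B2. representation (B1 \<union> B2) (P u) u)"
    unfolding trace_wrt_def using fin disj by (rule sum.union_disjoint)
  also have "\<dots> = card B1"
    using representation_basis[OF indep] by (simp add: P_B1 P_B2 representation_zero)
  finally have "trace_wrt B P = card B1"
    using trace_wrt_basis_independent[OF B C P] by simp
  with fin(1) B1(3) show ?thesis by (rule that)
qed

lemma trace_wrt_idempotent:
  fixes B :: "'a::real_vector set" and P :: "'a \<Rightarrow> 'a"
  assumes "finite_dimensional_vector_space (*\<^sub>R) B"
    and "linear P" and "\<And>v. P (P v) = P v"
  shows "trace_wrt B P \<ge> 0" and "P v \<noteq> 0 \<Longrightarrow> trace_wrt B P > 0"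
proof -
  obtain B1 where "finite B1" "range P \<subseteq> span B1" and trace: "trace_wrt B P = card B1"
    using trace_wrt_idempotent_eq_card[of B P, OF assms] .
  then show "trace_wrt B P \<ge> 0" by simp
  assume "P v \<noteq> 0"
  with \<open>range P \<subseteq> span B1\<close> have "B1 \<noteq> {}" by (metis rangeI singletonD span_empty subsetD)
  with trace \<open>finite B1\<close> show "trace_wrt B P > 0" by (simp add: card_gt_0_iff)
qed

section \<open>Unital Jordan algebras\<close>

locale unital_jordan_algebra =
  fixes m :: "'a::real_vector \<Rightarrow> 'a \<Rightarrow> 'a" and e :: 'a
  assumes jordan_algebra: "jordan_algebra m" and unit: "jordan_unit m e"
begin

lemma mult_add_left: "m (x + y) z = m x z + m y z"
  and mult_scaleR_left: "m (c *\<^sub>R x) y = c *\<^sub>R m x y"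
  and mult_commute: "m x y = m y x"
  and jordan_identity: "m (m x y) (m x x) = m x (m y (m x x))"
  using jordan_algebra unfolding jordan_algebra_def by blast+

lemma mult_unit_left [simp]: "m e x = x" and mult_unit_right [simp]: "m x e = x"
  using unit unfolding jordan_unit_def by blast+

lemma linear_mult_left: "linear (\<lambda>x. m x y)"
  by (rule linearI) (simp_all add: mult_add_left mult_scaleR_left)

lemma linear_mult_right: "linear (m x)"
proof -
  have "m x = (\<lambda>y. m y x)" by (rule ext) (rule mult_commute)
  then show ?thesis using linear_mult_left by simp
qed

lemma mult_zero_left [simp]: "m 0 x = 0" using linear_0[OF linear_mult_left] .
lemma mult_zero_right [simp]: "m x 0 = 0" using linear_0[OF linear_mult_right] .
lemma mult_add_right: "m x (y + z) = m x y + m x z" using linear_add[OF linear_mult_right] .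
lemma mult_scaleR_right: "m x (c *\<^sub>R y) = c *\<^sub>R m x y" using linear_scale[OF linear_mult_right] .
lemma mult_minus_left: "m (- x) y = - m x y" using linear_neg[OF linear_mult_left] .
lemma mult_minus_right: "m x (- y) = - m x y" using linear_neg[OF linear_mult_right] .
lemma mult_diff_left: "m (x - y) z = m x z - m y z" using linear_diff[OF linear_mult_left] .
lemma mult_diff_right: "m x (y - z) = m x y - m x z" using linear_diff[OF linear_mult_right] .
lemma mult_sum_left: "m (sum f I) y = (\<Sum>i\<in>I. m (f i) y)" using linear_sum[OF linear_mult_left] .
lemma mult_sum_right: "m y (sum f I) = (\<Sum>i\<in>I. m y (f i))" using linear_sum[OF linear_mult_right] .

lemmas mult_bilinear = mult_add_left mult_add_right mult_scaleR_left mult_scaleR_right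
  mult_minus_left mult_minus_right mult_diff_left mult_diff_right

lemma jordan_identity_linearized:
  "m (m w y) (m x x) + 2 *\<^sub>R m (m x y) (m x w) = m w (m y (m x x)) + 2 *\<^sub>R m x (m y (m x w))"
proof -
  have "2 *\<^sub>R (m (m w y) (m x x) + 2 *\<^sub>R m (m x y) (m x w) - m w (m y (m x x))
      - 2 *\<^sub>R m x (m y (m x w)))
    = (m (m (x + w) y) (m (x + w) (x + w)) - m (x + w) (m y (m (x + w) (x + w))))
      - (m (m (x - w) y) (m (x - w) (x - w)) - m (x - w) (m y (m (x - w) (x - w))))
      - 2 *\<^sub>R (m (m w y) (m w w) - m w (m y (m w w)))"
    by (simp add: mult_bilinear algebra_simps mult_commute[of w x] scaleR_2)
  also have "\<dots> = 0"
    by (simp add: jordan_identity[of "x + w" y] jordan_identity[of "x - w" y] jordan_identity[of w y])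
  finally have "m (m w y) (m x x) + 2 *\<^sub>R m (m x y) (m x w)
      - (m w (m y (m x x)) + 2 *\<^sub>R m x (m y (m x w))) = 0"
    by (simp add: diff_diff_eq)
  then show ?thesis by simp
qed

lemma jordan_identity_fully_linearized:
  "m (m w y) (m x a) + m (m x y) (m a w) + m (m a y) (m x w)
    = m w (m y (m x a)) + m x (m y (m a w)) + m a (m y (m x w))"
proof -
  define F where "F u = m (m w y) (m u u) + 2 *\<^sub>R m (m u y) (m u w)
    - m w (m y (m u u)) - 2 *\<^sub>R m u (m y (m u w))" for u
  have F_zero: "F u = 0" for u
    using jordan_identity_linearized[of w y u] by (simp add: F_def)
  have "F (x + a) - F x - F a = 2 *\<^sub>R (m (m w y) (m x a) + m (m x y) (m a w) + m (m a y) (m x w)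
      - m w (m y (m x a)) - m x (m y (m a w)) - m a (m y (m x w)))"
    by (simp add: F_def mult_bilinear algebra_simps mult_commute[of a x] scaleR_2)
  then show ?thesis by (simp add: F_zero) (simp add: algebra_simps)
qed

lemma mult_mult_symmetry:
  assumes "symmetry m e s"
  shows "m (m s y) (m s w) = m s (m y (m s w))"
proof -
  have "m (m w y) (m s s) + 2 *\<^sub>R m (m s y) (m s w) = m w (m y (m s s)) + 2 *\<^sub>R m s (m y (m s w))"
    by (rule jordan_identity_linearized)
  then show ?thesis using assms by (simp add: symmetry_def)
qed

lemma symmetry_mult_cube:
  assumes "symmetry m e s"
  shows "m s (m s (m s v)) = m s v"
  using mult_mult_symmetry[OF assms, of s v] assms by (simp add: symmetry_def)

lemma linear_U_op: "linear (U_op m s)"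
  unfolding U_op_def by (rule linearI) (simp_all add: mult_bilinear algebra_simps)

lemma U_op_involutive:
  assumes "symmetry m e s"
  shows "U_op m s (U_op m s v) = v"
  using symmetry_mult_cube[OF assms, of "m s v"]
  by (simp add: U_op_def mult_bilinear algebra_simps flip: scaleR_add_left)

lemma mult_symmetry_square_left:
  assumes s: "symmetry m e s"
  shows "m (m s (m s a)) v
    = 2 *\<^sub>R m s (m a (m s v)) + m a v - m s (m s (m a v)) - m a (m s (m s v))"
proof -
  have "m (m v s) (m s a) + m (m s s) (m a v) + m (m a s) (m s v)
      = m v (m s (m s a)) + m s (m s (m a v)) + m a (m s (m s v))"
    by (rule jordan_identity_fully_linearized)
  moreover have "m (m v s) (m s a) = m s (m a (m s v))"
    using mult_commute[of v s] mult_commute[of "m s v" "m s a"] mult_mult_symmetry[OF s, of a v]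
    by simp
  moreover have "m (m a s) (m s v) = m s (m a (m s v))"
    using mult_commute[of a s] mult_mult_symmetry[OF s, of a v] by simp
  ultimately show ?thesis
    using s by (simp add: symmetry_def mult_commute[of v "m s (m s a)"] algebra_simps scaleR_2)
qed

lemma symmetry_square_mult_square:
  assumes s: "symmetry m e s"
  shows "m s (m s (m a (m s (m s v)))) = m s (m a (m s v))"
proof -
  have "m s (m s (m a (m s (m s v)))) = m s (m (m s a) (m s (m s v)))"
    by (simp only: mult_mult_symmetry[OF s])
  also have "\<dots> = m (m s a) (m s (m s (m s v)))"
    using mult_mult_symmetry[OF s, of "m s (m s v)" a] mult_commute[of "m s (m s v)" "m s a"]
      mult_commute[of "m s a" "m s (m s (m s v))"]
    by simp
  also have "\<dots> = m s (m a (m s v))"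
    by (simp only: symmetry_mult_cube[OF s] mult_mult_symmetry[OF s])
  finally show ?thesis .
qed

lemma mult_U_op_left:
  assumes s: "symmetry m e s"
  shows "m (U_op m s a) v = U_op m s (m a (U_op m s v))"
proof -
  have "m (U_op m s a) v = 2 *\<^sub>R m (m s (m s a)) v - m a v"
    by (simp add: U_op_def mult_diff_left mult_scaleR_left)
  also have "\<dots> = 2 *\<^sub>R (2 *\<^sub>R m s (m a (m s v)) - m s (m s (m a v)) - m a (m s (m s v))) + m a v"
    by (simp add: mult_symmetry_square_left[OF s] scaleR_2)
  also have "\<dots> = U_op m s (m a (U_op m s v))"
    by (simp add: U_op_def mult_bilinear symmetry_square_mult_square[OF s] algebra_simps)
  finally show ?thesis .
qed

lemma U_op_mult:
  assumes "symmetry m e s"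
  shows "U_op m s (m a b) = m (U_op m s a) (U_op m s b)"
  using mult_U_op_left[OF assms, of a "U_op m s b"] U_op_involutive[OF assms, of b] by simp

definition operator_commute :: "'a \<Rightarrow> 'a \<Rightarrow> bool" where
  "operator_commute a b \<longleftrightarrow> (\<forall>v. m a (m b v) = m b (m a v))"

lemma operator_commute_sym: "operator_commute a b \<Longrightarrow> operator_commute b a"
  by (simp add: operator_commute_def)

lemma operator_commute_unit: "operator_commute e a"
  by (simp add: operator_commute_def)

lemma operator_commute_square: "operator_commute x (m x x)"
  using jordan_identity[of x] by (simp add: operator_commute_def mult_commute)

lemma operator_commute_mult_square:
  assumes "operator_commute p x" "operator_commute p (m x x)"
    and "operator_commute p y" "operator_commute p (m x y)"
  shows "operator_commute p (m y (m x x))"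
proof -
  have L: "m (m y (m x x)) v
      = m (m x x) (m y v) + 2 *\<^sub>R m (m x y) (m x v) - 2 *\<^sub>R m x (m y (m x v))" for v
    using jordan_identity_linearized[of v y x]
    by (simp add: mult_commute[of v] mult_commute[of "m x x"] algebra_simps)
  show ?thesis
    using assms by (simp add: operator_commute_def L mult_bilinear)
qed

fun jpow :: "'a \<Rightarrow> nat \<Rightarrow> 'a" where
  "jpow x 0 = e"
| "jpow x (Suc n) = m x (jpow x n)"

lemma jpow_1 [simp]: "jpow x 1 = x"
  by simp

lemma jpow_2: "jpow x 2 = m x x"
  by (simp add: numeral_2_eq_2)

lemma operator_commute_jpow_Suc:
  assumes IH: "\<And>i j. i \<le> n \<Longrightarrow> j \<le> n \<Longrightarrow> operator_commute (jpow x i) (jpow x j)"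
    and "j \<le> n"
  shows "operator_commute (jpow x (Suc n)) (jpow x j)"
proof (cases "n \<le> 1")
  case True
  with \<open>j \<le> n\<close> consider "j = 0" | "j = 1" "n = 1" by linarith
  then show ?thesis
  proof cases
    case 1
    then show ?thesis using operator_commute_sym[OF operator_commute_unit] by simp
  next
    case 2
    then show ?thesis using operator_commute_sym[OF operator_commute_square[of x]] by simp
  qed
next
  case False
  then obtain l where n: "n = Suc (Suc l)" by (auto simp: not_le dest!: less_imp_Suc_add)
  define y where "y = jpow x (Suc l)"
  have "operator_commute x y" using IH[of 1 "Suc l"] n by (simp add: y_def)
  have "jpow x (Suc n) = m x (m x y)" by (simp add: n y_def)
  also have "\<dots> = m x (m y x)" by (simp only: mult_commute[of x y])
  also have "\<dots> = m y (m x x)" using \<open>operator_commute x y\<close> by (simp add: operator_commute_def)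
  finally have "jpow x (Suc n) = m y (m x x)" .
  moreover have "operator_commute (jpow x j) (m y (m x x))"
  proof (rule operator_commute_mult_square)
    show "operator_commute (jpow x j) x" "operator_commute (jpow x j) (m x x)"
      "operator_commute (jpow x j) y" "operator_commute (jpow x j) (m x y)"
      using IH[of j 1] IH[of j 2] IH[of j "Suc l"] IH[of j n] \<open>j \<le> n\<close> n
      by (simp_all add: jpow_2 y_def)
  qed
  ultimately show ?thesis by (metis operator_commute_sym)
qed

lemma operator_commute_jpow_le:
  "i \<le> n \<Longrightarrow> j \<le> n \<Longrightarrow> operator_commute (jpow x i) (jpow x j)"
proof (induction n arbitrary: i j)
  case 0
  then show ?case by (simp add: operator_commute_def)
next
  case (Suc n)
  consider "i \<le> n" "j \<le> n" | "i = Suc n" "j \<le> n" | "i \<le> n" "j = Suc n" | "i = Suc n" "j = Suc n"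
    using Suc.prems by linarith
  then show ?case
  proof cases
    case 1
    then show ?thesis by (rule Suc.IH)
  next
    case 2
    then show ?thesis using operator_commute_jpow_Suc[OF Suc.IH] by simp
  next
    case 3
    then show ?thesis
      using operator_commute_sym[OF operator_commute_jpow_Suc[OF Suc.IH, where j = i]] by simp
  next
    case 4
    then show ?thesis by (simp add: operator_commute_def)
  qed
qed

lemma operator_commute_jpow: "operator_commute (jpow x i) (jpow x j)"
  using operator_commute_jpow_le[of i "max i j" j] by simp

definition peval :: "real poly \<Rightarrow> 'a \<Rightarrow> 'a" where
  "peval p x = (\<Sum>i\<le>degree p. coeff p i *\<^sub>R jpow x i)"

lemma peval_eq_sum_upto: "degree p \<le> N \<Longrightarrow> peval p x = (\<Sum>i\<le>N. coeff p i *\<^sub>R jpow x i)"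
  unfolding peval_def by (rule sum.mono_neutral_left) (auto simp: coeff_eq_0)

lemma peval_0 [simp]: "peval 0 x = 0"
  by (simp add: peval_def)

lemma peval_add: "peval (p + q) x = peval p x + peval q x"
proof -
  let ?N = "max (degree p) (degree q)"
  have "degree (p + q) \<le> ?N" by (rule degree_add_le) auto
  then show ?thesis
    by (simp add: peval_eq_sum_upto[of _ ?N] peval_eq_sum_upto[of p ?N] peval_eq_sum_upto[of q ?N]
        scaleR_add_left sum.distrib)
qed

lemma peval_smult: "peval (smult c p) x = c *\<^sub>R peval p x"
  by (simp add: peval_eq_sum_upto[of "smult c p" "degree p"] peval_def scaleR_sum_right)

lemma peval_diff: "peval (p - q) x = peval p x - peval q x"
  using peval_add[of p "- q" x] peval_smult[of "- 1" q x] by simp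

lemma peval_sum: "peval (sum f I) x = (\<Sum>i\<in>I. peval (f i) x)"
  by (induction I rule: infinite_finite_induct) (simp_all add: peval_add)

lemma peval_pCons: "peval (pCons a p) x = a *\<^sub>R e + m x (peval p x)"
proof -
  have "peval (pCons a p) x = (\<Sum>i\<le>Suc (degree p). coeff (pCons a p) i *\<^sub>R jpow x i)"
    by (rule peval_eq_sum_upto) (simp add: degree_pCons_le)
  also have "\<dots> = a *\<^sub>R e + m x (peval p x)"
    by (subst sum.atMost_Suc_shift) (simp add: peval_def mult_sum_right mult_scaleR_right)
  finally show ?thesis .
qed

lemma peval_monom: "peval (monom c n) x = c *\<^sub>R jpow x n"
  by (simp add: peval_eq_sum_upto[of _ n] degree_monom_le if_distrib[of "\<lambda>c. c *\<^sub>R _"]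
      cong: if_cong)

lemma operator_commute_peval_jpow: "operator_commute (peval p x) (jpow x j)"
  using operator_commute_jpow
  by (simp add: operator_commute_def peval_def mult_sum_left mult_sum_right mult_scaleR_left
      mult_scaleR_right)

lemma peval_mult: "peval (p * q) x = m (peval p x) (peval q x)"
proof (induction p rule: pCons_induct)
  case 0
  then show ?case by simp
next
  case (pCons a p)
  have "m (peval q x) (m (jpow x 1) (peval p x)) = m (jpow x 1) (m (peval q x) (peval p x))"
    using operator_commute_peval_jpow[of q x 1] by (simp only: operator_commute_def)
  then have "m (m x (peval p x)) (peval q x) = m x (m (peval p x) (peval q x))"
    by (simp add: mult_commute)
  then show ?case by (simp add: peval_add peval_smult peval_pCons pCons.IH mult_bilinear)
qed

end

section \<open>Finite dimensional formally real Jordan algebras\<close>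

locale euclidean_jordan_algebra = unital_jordan_algebra +
  assumes formally_real: "formally_real m"
    and finite_dim: "finite_dim_space TYPE('a)"
begin

lemma sum_squares_eq_0: "m u u + m v v = 0 \<Longrightarrow> u = 0 \<and> v = 0"
  using formally_real[unfolded formally_real_def, rule_format,
      where n = 2 and a = "\<lambda>i. if i = 0 then u else v"]
  by (force simp: numeral_2_eq_2)

lemma square_eq_0: "m v v = 0 \<Longrightarrow> v = 0"
  using sum_squares_eq_0[of v 0] by simp

lemma ex_finite_basis: "\<exists>B. finite_dimensional_vector_space (*\<^sub>R) (B :: 'a set)"
proof -
  obtain B0 :: "'a set" where "finite B0" "span B0 = UNIV"
    using finite_dim unfolding finite_dim_space_def by blast
  moreover obtain B :: "'a set" where "independent B" "UNIV \<subseteq> span B"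
    using basis_exists[of UNIV] by blast
  ultimately have "finite B" using independent_span_bound[of B0 B] by auto
  with \<open>independent B\<close> \<open>UNIV \<subseteq> span B\<close> show ?thesis
    by (auto simp: finite_dimensional_vector_space_scaleR_iff)
qed

definition basis :: "'a set" where
  "basis = (SOME B. finite_dimensional_vector_space (*\<^sub>R) B)"

lemma finite_dimensional_basis: "finite_dimensional_vector_space (*\<^sub>R) basis"
  unfolding basis_def using ex_finite_basis by (rule someI_ex)

lemma ex_annihilating_poly: "\<exists>p. p \<noteq> 0 \<and> peval p x = 0"
proof (cases "inj_on (jpow x) {..card basis}")
  case False
  then obtain i j where "i \<noteq> j" "jpow x i = jpow x j" by (auto simp: inj_on_def)
  then have "coeff (monom 1 i - monom 1 j) i = (1::real)" "peval (monom 1 i - monom 1 j) x = 0"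
    by (simp_all add: peval_diff peval_monom)
  then show ?thesis by (metis one_neq_zero coeff_0)
next
  case True
  define X where "X = jpow x ` {..card basis}"
  have "dependent X"
  proof (rule ccontr)
    assume "independent X"
    then have "card X \<le> card basis"
      using independent_span_bound[of basis X] finite_dimensional_basis
      by (auto simp: finite_dimensional_vector_space_scaleR_iff)
    with True show False by (simp add: X_def card_image)
  qed
  then obtain u where u: "(\<Sum>v\<in>X. u v *\<^sub>R v) = 0" "\<exists>v\<in>X. u v \<noteq> 0"
    by (auto simp: X_def dependent_finite)
  define p where "p = (\<Sum>i\<le>card basis. monom (u (jpow x i)) i)"
  have "peval p x = (\<Sum>v\<in>X. u v *\<^sub>R v)"
    using True by (simp add: p_def X_def peval_sum peval_monom sum.reindex)
  moreover obtain i where "i \<le> card basis" "u (jpow x i) \<noteq> 0" using u(2) by (auto simp: X_def)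
  then have "coeff p i \<noteq> 0" by (simp add: p_def coeff_sum)
  ultimately show ?thesis using u(1) by (metis coeff_0)
qed

text \<open>A real polynomial annihilating \<open>x\<close> of minimal degree has only simple real roots: a factor
  \<open>(t - a)\<^sup>2 + b\<^sup>2\<close> would give an annihilator \<open>(t - a) k\<close> of smaller degree, because the sum of
  squares \<open>((x - a) k(x))\<^sup>2 + (b k(x))\<^sup>2\<close> vanishes.\<close>
lemma ex_split_annihilator: "\<exists>S. finite S \<and> peval (\<Prod>r\<in>S. [:- r, 1:]) x = 0"
proof -
  obtain p where p: "p \<noteq> 0" "peval p x = 0"
    and minimal: "\<And>q. q \<noteq> 0 \<Longrightarrow> peval q x = 0 \<Longrightarrow> degree p \<le> degree q"
    using ex_has_least_nat[of "\<lambda>p. p \<noteq> 0 \<and> peval p x = 0" _ degree] ex_annihilating_poly[of x]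
    by blast
  from p(1) show ?thesis
  proof (cases rule: real_poly_simple_roots_or_square_sum_factor)
    case (1 c)
    define g where "g = (\<Prod>r | poly p r = 0. [:- r, 1:])"
    have pg: "p = smult c g" using 1 by (simp add: g_def)
    with p have "c \<noteq> 0" "c *\<^sub>R peval g x = 0" by (auto simp: peval_smult)
    then have "peval g x = 0" by simp
    then show ?thesis using poly_roots_finite[OF p(1)] unfolding g_def by blast
  next
    case (2 a b k)
    define u where "u = [:- a, 1:] * k"
    define v where "v = [:b:] * k"
    have quadratic: "[:- a, 1:]^2 + [:b:]^2 = [:a^2 + b^2, -2 * a, 1:]"
      by (simp add: power2_eq_square algebra_simps)
    have "k \<noteq> 0" using 2 p(1) by auto
    then have "u \<noteq> 0" unfolding u_def by (metis mult_eq_0_iff pCons_eq_0_iff zero_neq_one)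
    have "degree u = 1 + degree k" using \<open>k \<noteq> 0\<close> unfolding u_def by (subst degree_mult_eq) auto
    moreover have "degree p = 2 + degree k"
      using \<open>k \<noteq> 0\<close> unfolding 2 quadratic by (subst degree_mult_eq) auto
    ultimately have "degree u < degree p" by simp
    have "u * u + v * v = p * k"
      unfolding u_def v_def 2 power2_eq_square by (simp only: distrib_left distrib_right mult_ac)
    then have "m (peval u x) (peval u x) + m (peval v x) (peval v x) = 0"
      using p(2) by (metis peval_add peval_mult mult_zero_left)
    then have "peval u x = 0" using sum_squares_eq_0 by blast
    with minimal[OF \<open>u \<noteq> 0\<close>] \<open>degree u < degree p\<close> show ?thesis by simp
  qed
qed

lemma peval_eq_0_if_vanishes_on_roots:
  assumes "finite S" "peval (\<Prod>r\<in>S. [:- r, 1:]) x = 0" "\<And>r. r \<in> S \<Longrightarrow> poly q r = 0"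
  shows "peval q x = 0"
proof -
  obtain k where "q = (\<Prod>r\<in>S. [:- r, 1:]) * k"
    using prod_linear_factors_dvd[OF assms(1,3)] by (auto simp: dvd_def)
  with assms(2) show ?thesis by (simp add: peval_mult)
qed

lemma square_spectral_decomposition:
  obtains S f where "finite S" "\<And>r. r \<in> S \<Longrightarrow> m (f r) (f r) = f r"
    "m x x = (\<Sum>r\<in>S. r^2 *\<^sub>R f r)"
proof -
  obtain S where S: "finite S" and annih: "peval (\<Prod>r\<in>S. [:- r, 1:]) x = 0"
    using ex_split_annihilator by blast
  obtain l where l: "\<And>r v. v \<in> S \<Longrightarrow> poly (l r) v = (if v = r then 1 else 0)"
    using lagrange_basis_polys[OF S] by blast
  define f where "f r = peval (l r) x" for r
  have "peval (l r * l r - l r) x = 0" if "r \<in> S" for r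
    by (rule peval_eq_0_if_vanishes_on_roots[OF S annih]) (simp add: l)
  then have "m (f r) (f r) = f r" if "r \<in> S" for r
    using that by (simp add: f_def peval_diff peval_mult)
  moreover have "peval (monom 1 2 - (\<Sum>r\<in>S. smult (r^2) (l r))) x = 0"
  proof (rule peval_eq_0_if_vanishes_on_roots[OF S annih])
    fix v assume "v \<in> S"
    then have "(\<Sum>r\<in>S. r^2 * poly (l r) v) = v^2"
      using S by (simp add: l if_distrib[of "\<lambda>c. _ * c"] cong: if_cong)
    then show "poly (monom 1 2 - (\<Sum>r\<in>S. smult (r^2) (l r))) v = 0"
      by (simp add: poly_sum poly_monom)
  qed
  then have "m x x = (\<Sum>r\<in>S. r^2 *\<^sub>R f r)"
    by (simp add: peval_diff peval_sum peval_smult peval_monom jpow_2 f_def)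
  ultimately show ?thesis using S that by blast
qed

definition trace_L :: "'a \<Rightarrow> real" where
  "trace_L z = trace_wrt basis (m z)"

lemma linear_trace_L: "linear trace_L"
proof (rule linearI)
  fix a b :: 'a and c :: real
  have "m (a + b) = (\<lambda>v. m a v + m b v)" "m (c *\<^sub>R a) = (\<lambda>v. c *\<^sub>R m a v)"
    by (simp_all add: fun_eq_iff mult_add_left mult_scaleR_left)
  then show "trace_L (a + b) = trace_L a + trace_L b" "trace_L (c *\<^sub>R a) = c *\<^sub>R trace_L a"
    by (simp_all add: trace_L_def trace_wrt_add[OF finite_dimensional_basis]
        trace_wrt_scaleR[OF finite_dimensional_basis])
qed

lemma idempotent_mult_cube:
  assumes "m f f = f"
  shows "m f (m f (m f v)) = (3 / 2) *\<^sub>R m f (m f v) - (1 / 2) *\<^sub>R m f v"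
proof -
  have "m (m v f) (m f f) + 2 *\<^sub>R m (m f f) (m f v) = m v (m f (m f f)) + 2 *\<^sub>R m f (m f (m f v))"
    by (rule jordan_identity_linearized)
  then have "m f (m f v) + 2 *\<^sub>R m f (m f v) = m f v + 2 *\<^sub>R m f (m f (m f v))"
    using assms by (simp add: mult_commute[of v f] mult_commute[of "m f v" f])
  moreover have "m f (m f v) + 2 *\<^sub>R m f (m f v) = 3 *\<^sub>R m f (m f v)"
    using scaleR_left_distrib[of 1 2 "m f (m f v)"] by simp
  ultimately have "2 *\<^sub>R m f (m f (m f v)) = 3 *\<^sub>R m f (m f v) - m f v"
    by (simp add: algebra_simps)
  then have "(1 / 2) *\<^sub>R (2 *\<^sub>R m f (m f (m f v))) = (1 / 2) *\<^sub>R (3 *\<^sub>R m f (m f v) - m f v)"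
    by (rule arg_cong)
  then show ?thesis by (simp add: algebra_simps)
qed

text \<open>Peirce decomposition: by \<open>idempotent_mult_cube\<close> the operator \<open>L = L\<^sub>f\<close> satisfies
  \<open>L (2L - 1)(L - 1) = 0\<close>, so \<open>L = P\<^sub>1 + P\<^sub>1\<^sub>/\<^sub>2 / 2\<close> with the idempotents
  \<open>P\<^sub>1 = 2L\<^sup>2 - L\<close> and \<open>P\<^sub>1\<^sub>/\<^sub>2 = 4L - 4L\<^sup>2\<close>, whose traces are nonnegative.\<close>
lemma trace_L_idempotent:
  assumes f: "m f f = f"
  shows "trace_L f \<ge> 0" and "f \<noteq> 0 \<Longrightarrow> trace_L f > 0"
proof -
  define P1 where "P1 v = 2 *\<^sub>R m f (m f v) - m f v" for v
  define Ph where "Ph v = 4 *\<^sub>R m f v - 4 *\<^sub>R m f (m f v)" for v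
  have linear: "linear P1" "linear Ph"
    unfolding P1_def Ph_def by (rule linearI; simp add: mult_bilinear algebra_simps)+
  have idem: "P1 (P1 v) = P1 v" "Ph (Ph v) = Ph v" for v
  proof -
    define g where "g c d = c *\<^sub>R m f v + d *\<^sub>R m f (m f v)" for c d :: real
    have L_g: "m f (g c d) = g (- d / 2) (c + 3 / 2 * d)" for c d
      by (simp add: g_def mult_bilinear idempotent_mult_cube[OF f] algebra_simps)
    have g_diff: "g c d - g c' d' = g (c - c') (d - d')" for c d c' d'
      by (simp add: g_def algebra_simps)
    have g_scaleR: "k *\<^sub>R g c d = g (k * c) (k * d)" for k c d
      by (simp add: g_def algebra_simps)
    have "P1 v = g (- 1) 2" "Ph v = g 4 (- 4)" by (simp_all add: P1_def Ph_def g_def)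
    then show "P1 (P1 v) = P1 v" "Ph (Ph v) = Ph v"
      by (simp_all add: P1_def Ph_def L_g g_diff g_scaleR)
  qed
  have "trace_L f = trace_wrt basis P1 + 1 / 2 * trace_wrt basis Ph"
  proof -
    have "m f = (\<lambda>v. P1 v + (1 / 2) *\<^sub>R Ph v)"
      by (rule ext) (simp add: P1_def Ph_def algebra_simps scaleR_2)
    then show ?thesis
      by (simp add: trace_L_def trace_wrt_add[OF finite_dimensional_basis]
          trace_wrt_scaleR[OF finite_dimensional_basis])
  qed
  moreover have "P1 f = f" using f by (simp add: P1_def scaleR_2)
  ultimately show "trace_L f \<ge> 0" "f \<noteq> 0 \<Longrightarrow> trace_L f > 0"
    using trace_wrt_idempotent[of basis P1, OF finite_dimensional_basis linear(1) idem(1)]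
      trace_wrt_idempotent(1)[of basis Ph, OF finite_dimensional_basis linear(2) idem(2)]
    by fastforce+
qed

lemma trace_L_square_pos:
  assumes "x \<noteq> 0"
  shows "trace_L (m x x) > 0"
proof -
  obtain S f where S: "finite S" and idem: "\<And>r. r \<in> S \<Longrightarrow> m (f r) (f r) = f r"
    and decomp: "m x x = (\<Sum>r\<in>S. r^2 *\<^sub>R f r)"
    using square_spectral_decomposition[of x] by blast
  have "m x x \<noteq> 0" using assms square_eq_0 by blast
  then obtain r where r: "r \<in> S" "r^2 *\<^sub>R f r \<noteq> 0"
    using decomp by (metis (no_types, lifting) sum.neutral)
  have "trace_L (m x x) = (\<Sum>r\<in>S. r^2 * trace_L (f r))"
    by (simp add: decomp linear_sum[OF linear_trace_L] linear_scale[OF linear_trace_L])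
  also have "\<dots> > 0"
  proof (rule sum_pos2[OF S r(1)])
    show "0 < r^2 * trace_L (f r)" using r idem trace_L_idempotent(2) by simp
    show "0 \<le> i^2 * trace_L (f i)" if "i \<in> S" for i using that idem trace_L_idempotent(1) by simp
  qed
  finally show ?thesis .
qed

lemma trace_L_U_op:
  assumes "symmetry m e s"
  shows "trace_L (U_op m s z) = trace_L z"
proof -
  have "m (U_op m s z) = (\<lambda>v. U_op m s (m z (U_op m s v)))"
    by (simp add: fun_eq_iff mult_U_op_left[OF assms])
  then have "trace_L (U_op m s z) = trace_wrt basis (\<lambda>v. U_op m s (m z (U_op m s v)))"
    by (simp add: trace_L_def)
  also have "\<dots> = trace_wrt basis (\<lambda>v. m z (U_op m s (U_op m s v)))"
    using linear_compose[OF linear_U_op linear_mult_right]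
    by (intro trace_wrt_comp_commute[OF finite_dimensional_basis linear_U_op]) (simp add: o_def)
  also have "\<dots> = trace_L z" by (simp add: trace_L_def U_op_involutive[OF assms])
  finally show ?thesis .
qed

lemma eq_0_if_trace_L_square_eq_0: "trace_L (m x x) = 0 \<Longrightarrow> x = 0"
  using trace_L_square_pos by fastforce

context
  fixes \<Delta> :: "'a \<Rightarrow> 'a"
  assumes two_local: "two_local_1_automorphism m e \<Delta>"
begin

lemma two_local_symmetry:
  obtains s where "symmetry m e s" "\<Delta> x = U_op m s x" "\<Delta> y = U_op m s y"
  using two_local unfolding two_local_1_automorphism_def by blast

lemma two_local_trace_form: "trace_L (m (\<Delta> u) (\<Delta> v)) = trace_L (m u v)"
proof -
  obtain s where s: "symmetry m e s" "\<Delta> u = U_op m s u" "\<Delta> v = U_op m s v"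
    by (rule two_local_symmetry)
  then show ?thesis by (simp add: U_op_mult[OF s(1), symmetric] trace_L_U_op[OF s(1)])
qed

text \<open>The defect \<open>D\<close> is orthogonal to the range of \<open>\<Delta>\<close>, in particular to itself, for the
  positive definite trace form \<open>(a, b) \<mapsto> trace_L (m a b)\<close>.\<close>
lemma two_local_add: "\<Delta> (x + y) = \<Delta> x + \<Delta> y"
proof -
  define D where "D = \<Delta> (x + y) - \<Delta> x - \<Delta> y"
  have orth: "trace_L (m D (\<Delta> w)) = 0" for w
    by (simp add: D_def mult_diff_left linear_diff[OF linear_trace_L] two_local_trace_form
        mult_add_left linear_add[OF linear_trace_L])
  have "m D D = m D (\<Delta> (x + y) - \<Delta> x - \<Delta> y)" by (simp only: D_def)
  then have "trace_L (m D D) = 0"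
    by (simp add: mult_diff_right linear_diff[OF linear_trace_L] orth)
  then have "D = 0" by (rule eq_0_if_trace_L_square_eq_0)
  then show ?thesis by (simp add: D_def algebra_simps)
qed

lemma two_local_scaleR: "\<Delta> (c *\<^sub>R x) = c *\<^sub>R \<Delta> x"
proof -
  obtain s where "symmetry m e s" "\<Delta> (c *\<^sub>R x) = U_op m s (c *\<^sub>R x)" "\<Delta> x = U_op m s x"
    by (rule two_local_symmetry)
  then show ?thesis by (simp add: linear_scale[OF linear_U_op])
qed

lemma linear_two_local: "linear \<Delta>"
  by (rule linearI) (simp_all add: two_local_add two_local_scaleR)

lemma two_local_square: "\<Delta> (m x x) = m (\<Delta> x) (\<Delta> x)"
proof -
  obtain s where "symmetry m e s" "\<Delta> (m x x) = U_op m s (m x x)" "\<Delta> x = U_op m s x"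
    by (rule two_local_symmetry)
  then show ?thesis by (simp add: U_op_mult)
qed

lemma two_local_mult: "\<Delta> (m x y) = m (\<Delta> x) (\<Delta> y)"
proof -
  have polarization: "m a b = (1 / 2) *\<^sub>R (m (a + b) (a + b) - m a a - m b b)" for a b
    by (simp add: mult_bilinear mult_commute[of b a] scaleR_2)
  show ?thesis
    by (simp add: polarization[of x y] polarization[of "\<Delta> x" "\<Delta> y"] two_local_add
        two_local_scaleR two_local_square linear_diff[OF linear_two_local])
qed

lemma inj_two_local: "inj \<Delta>"
proof (rule injI)
  fix u v assume "\<Delta> u = \<Delta> v"
  then have "\<Delta> (u - v) = 0" by (simp add: linear_diff[OF linear_two_local])
  then have "trace_L (m (u - v) (u - v)) = 0"
    using two_local_trace_form[of "u - v" "u - v"] by (simp add: linear_0[OF linear_trace_L])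
  then have "u - v = 0" by (rule eq_0_if_trace_L_square_eq_0)
  then show "u = v" by simp
qed

lemma two_local_automorphism: "jordan_automorphism m \<Delta>"
proof -
  interpret finite_dimensional_vector_space "(*\<^sub>R) :: real \<Rightarrow> 'a \<Rightarrow> 'a" basis
    by (rule finite_dimensional_basis)
  have "surj \<Delta>"
    using linear_inj_imp_surj[OF linear_two_local[unfolded linear_def] inj_two_local] .
  then show ?thesis
    using linear_two_local inj_two_local two_local_mult
    by (simp add: jordan_automorphism_def bij_def)
qed

end

end

theorem theorem5p7:
  fixes m :: "'a::real_vector \<Rightarrow> 'a \<Rightarrow> 'a" and e :: 'a and \<Delta> :: "'a \<Rightarrow> 'a"
  assumes "jordan_algebra m"
    and "jordan_unit m e"
    and "formally_real m"
    and "finite_dim_space TYPE('a)"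
    and "two_local_1_automorphism m e \<Delta>"
  shows "jordan_automorphism m \<Delta>"
proof -
  interpret euclidean_jordan_algebra m e
    using assms(1-4) by unfold_locales
  show ?thesis using assms(5) by (rule two_local_automorphism)
qed

end
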